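(* For every set $M$ of $m$ items, every integer $n\ge 1$, and every normalized monotone valuation $v:2^M\to\mathbb{R}_{\ge 0}$, we have $\mathrm{RMMS}(M,v,n)\ \ge\ \mathrm{MXS}(M,v,n)$.
   Context: Items: a finite set $M=\{e_1,\dots,e_m\}$; there are $n$ agents. A valuation is a function $v:2^M\to\mathbb{R}$ that is normalized ($v(\emptyset)=0$) and monotone ($v(S)\le v(T)$ whenever $S\subseteq T\subseteq M$). For $S\subseteq M$ and $e\in S$, $S-e$ denotes $S\setminus\{e\}$. An allocation is a partition $A_1,\dots,A_n$ of $M$ (parts may be empty), with $A_i$ given to agent $a_i$. Residual maximin share: $\mathrm{RMMS}(M,v,n)$ is the largest real $t$ with the following property: for every $0\le k<n$ and every $k$ pairwise disjoint bundles $B_1,\dots,B_k\subseteq M$ with $v(B_j)<t$ for all $j$, the set $M\setminus(B_1\cup\dots\cup B_k)$ can be partitioned into $n-k$ bundles each of value (under $v$) at least $t$. MXS: for an agent $a_i$ with valuation $v_i$, $\mathrm{MXS}(M,v_i,n)$ is the minimum of $v_i(S)$ over all bundles $S\subseteq M$ for which there exists an allocation $A_1,\dots,A_n$ with $A_i=S$ such that for every $j$ and every $e\in A_j$, $v_i(S)\ge v_i(A_j-e)$ (i.e. $a_i$ has no EFX envy towards any agent). *)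

theory Defs
  imports Complex_Main
begin

definition valuation :: "'a set \<Rightarrow> ('a set \<Rightarrow> real) \<Rightarrow> bool" where
  "valuation M v \<longleftrightarrow> v {} = 0 \<and> (\<forall>S T. S \<subseteq> T \<and> T \<subseteq> M \<longrightarrow> v S \<le> v T)"

definition is_partition :: "'a set \<Rightarrow> nat \<Rightarrow> (nat \<Rightarrow> 'a set) \<Rightarrow> bool" where
  "is_partition X k P \<longleftrightarrow>
     (\<Union>j<k. P j) = X \<and> (\<forall>i<k. \<forall>j<k. i \<noteq> j \<longrightarrow> P i \<inter> P j = {})"

definition rmms_prop :: "'a set \<Rightarrow> ('a set \<Rightarrow> real) \<Rightarrow> nat \<Rightarrow> real \<Rightarrow> bool" where
  "rmms_prop M v n t \<longleftrightarrow>
     (\<forall>k<n. \<forall>B :: nat \<Rightarrow> 'a set.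
        (\<forall>j<k. B j \<subseteq> M \<and> v (B j) < t) \<and>
        (\<forall>i<k. \<forall>j<k. i \<noteq> j \<longrightarrow> B i \<inter> B j = {}) \<longrightarrow>
        (\<exists>P. is_partition (M - (\<Union>j<k. B j)) (n - k) P \<and> (\<forall>j<n - k. v (P j) \<ge> t)))"

definition RMMS :: "'a set \<Rightarrow> ('a set \<Rightarrow> real) \<Rightarrow> nat \<Rightarrow> real" where
  "RMMS M v n = (GREATEST t. rmms_prop M v n t)"

text \<open>Bundles S that some agent can receive in an allocation of M to n agents
  while having no EFX envy towards any agent.\<close>
definition mxs_bundles :: "'a set \<Rightarrow> ('a set \<Rightarrow> real) \<Rightarrow> nat \<Rightarrow> 'a set set" where
  "mxs_bundles M v n =
     {S. \<exists>A i. i < n \<and> is_partition M n A \<and> A i = S \<and>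
          (\<forall>j<n. \<forall>e\<in>A j. v S \<ge> v (A j - {e}))}"

definition MXS :: "'a set \<Rightarrow> ('a set \<Rightarrow> real) \<Rightarrow> nat \<Rightarrow> real" where
  "MXS M v n = Min (v ` mxs_bundles M v n)"

end

theory Submission
  imports Defs
begin

(* Fix bundles B_1, ..., B_k, each worth less than MXS, and let R be the rest of M.
  Partition R into n - k bundles so as to maximise the minimum value and, among such
  partitions, minimise a tie-breaking potential. Then a minimum bundle Y_s is not EFX-envious
  of any other bundle: moving the witnessing item into Y_s would improve the partition.
  Append the B_i to this partition. The holder of the most valuable B_i gets less than MXS,
  so it EFX-envies some bundle, necessarily some Y_j; hence every B_i is worth less than Y_s,
  the holder of Y_s envies nobody, and MXS <= v Y_s <= v Y_j for all j. So MXS is an admissible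
  RMMS threshold; and since a threshold may be rounded up to the next value of v, the greatest
  admissible threshold exists. *)

lemma valuation_mono: "valuation M v \<Longrightarrow> S \<subseteq> T \<Longrightarrow> T \<subseteq> M \<Longrightarrow> v S \<le> v T"
  by (simp add: valuation_def)

lemma valuation_subset: "valuation M v \<Longrightarrow> R \<subseteq> M \<Longrightarrow> valuation R v"
  by (auto simp: valuation_def)

lemma is_partition_subset: "is_partition X k P \<Longrightarrow> j < k \<Longrightarrow> P j \<subseteq> X"
  by (auto simp: is_partition_def)

lemma is_partition_move:
  assumes "is_partition X m Y" "s < m" "j < m" "j \<noteq> s" "e \<in> Y j"
  shows "is_partition X m (Y(s := insert e (Y s), j := Y j - {e}))"
proof -
  let ?Y' = "Y(s := insert e (Y s), j := Y j - {e})"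
  have disj: "Y a \<inter> Y b = {}" if "a < m" "b < m" "a \<noteq> b" for a b
    using assms(1) that by (simp add: is_partition_def)
  have "(\<Union>i<m. ?Y' i) = (\<Union>i<m. Y i)"
    using assms(2-5) by auto
  moreover have "?Y' a \<inter> ?Y' b = {}" if "a < m" "b < m" "a \<noteq> b" for a b
    using that assms(2-5) disj[of a b] disj[of a j] disj[of b j] disj[of s b] disj[of a s] by auto
  ultimately show ?thesis using assms(1) by (simp add: is_partition_def)
qed

lemma is_partition_single: "k \<ge> 1 \<Longrightarrow> is_partition X k (\<lambda>j. if j = 0 then X else {})"
  by (auto simp: is_partition_def)

lemma is_partition_append:
  assumes "is_partition X k B" "is_partition Z l Y" "X \<inter> Z = {}"
  shows "is_partition (X \<union> Z) (k + l) (\<lambda>j. if j < k then B j else Y (j - k))"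
proof -
  let ?C = "\<lambda>j. if j < k then B j else Y (j - k)"
  have "(\<lambda>j. j + k) ` {..<l} = {k..<k + l}"
    by (simp add: lessThan_atLeast0 add.commute)
  then have "{..<k + l} = {..<k} \<union> (\<lambda>j. j + k) ` {..<l}"
    by auto
  then have "(\<Union>j<k + l. ?C j) = (\<Union>j<k. B j) \<union> (\<Union>j<l. Y j)"
    by auto
  moreover have "?C a \<inter> ?C b = {}" if "a < k + l" "b < k + l" "a \<noteq> b" for a b
  proof -
    have "B a' \<inter> Y b' = {}" if "a' < k" "b' < l" for a' b'
      using assms that is_partition_subset by blast
    moreover have "Y (a - k) \<inter> Y (b - k) = {}" if "\<not> a < k" "\<not> b < k"
      using assms(2) that \<open>a < k + l\<close> \<open>b < k + l\<close> \<open>a \<noteq> b\<close> unfolding is_partition_def by auto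
    ultimately show ?thesis
      using assms(1) that unfolding is_partition_def by (auto simp: Int_commute)
  qed
  ultimately show ?thesis
    using assms unfolding is_partition_def by simp
qed

lemma finite_image_obtains_max:
  fixes f :: "'a \<Rightarrow> 'b::linorder"
  assumes "finite (f ` S)" "S \<noteq> {}"
  obtains x where "x \<in> S" "\<And>y. y \<in> S \<Longrightarrow> f y \<le> f x"
proof -
  obtain x where "x \<in> S" "f x = Max (f ` S)"
    using Max_in[OF assms(1)] assms(2) by (metis empty_is_image imageE)
  then show ?thesis using that Max_ge[OF assms(1)] by simp
qed

definition min_bundle_value :: "('a set \<Rightarrow> real) \<Rightarrow> nat \<Rightarrow> (nat \<Rightarrow> 'a set) \<Rightarrow> real" where
  "min_bundle_value v m Y = Min ((\<lambda>j. v (Y j)) ` {..<m})"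

lemma min_bundle_value_le: "j < m \<Longrightarrow> min_bundle_value v m Y \<le> v (Y j)"
  by (simp add: min_bundle_value_def)

lemma min_bundle_value_greatest:
  "m \<ge> 1 \<Longrightarrow> (\<And>j. j < m \<Longrightarrow> x \<le> v (Y j)) \<Longrightarrow> x \<le> min_bundle_value v m Y"
  unfolding min_bundle_value_def by (subst Min_ge_iff) (auto simp: lessThan_empty_iff)

lemma min_bundle_value_attained:
  assumes "m \<ge> 1"
  obtains s where "s < m" "v (Y s) = min_bundle_value v m Y"
proof -
  have "min_bundle_value v m Y \<in> (\<lambda>j. v (Y j)) ` {..<m}"
    unfolding min_bundle_value_def using assms by (intro Min_in) (auto simp: lessThan_empty_iff)
  then show ?thesis using that by auto
qed

(* For c above every bundle size this ranks partitions lexicographically by the number of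
  minimum bundles and then by minus their total size. *)
definition tie_potential :: "('a set \<Rightarrow> real) \<Rightarrow> nat \<Rightarrow> nat \<Rightarrow> (nat \<Rightarrow> 'a set) \<Rightarrow> nat" where
  "tie_potential v m c Y = (\<Sum>i | i < m \<and> v (Y i) = min_bundle_value v m Y. c - card (Y i))"

lemma min_bundle_value_move:
  assumes part: "is_partition R m Y" and val: "valuation R v"
    and s: "s < m" "v (Y s) = min_bundle_value v m Y"
    and j: "j < m" "j \<noteq> s" "e \<in> Y j" "min_bundle_value v m Y < v (Y j - {e})"
  shows "min_bundle_value v m Y \<le> min_bundle_value v m (Y(s := insert e (Y s), j := Y j - {e}))"
proof (rule min_bundle_value_greatest)
  show "m \<ge> 1" using s by simp
  fix i assume "i < m"
  have "v (Y s) \<le> v (insert e (Y s))"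
    using is_partition_subset[OF part] s(1) j(1,3) by (intro valuation_mono[OF val]) auto
  then show "min_bundle_value v m Y \<le> v ((Y(s := insert e (Y s), j := Y j - {e})) i)"
    using s j min_bundle_value_le[OF \<open>i < m\<close>, of v Y] by auto
qed

lemma tie_potential_move:
  assumes part: "is_partition R m Y" and "finite R"
    and s: "s < m" "v (Y s) = min_bundle_value v m Y"
    and j: "j < m" "j \<noteq> s" "e \<in> Y j" "min_bundle_value v m Y < v (Y j - {e})"
  defines "Y' \<equiv> Y(s := insert e (Y s), j := Y j - {e})"
  assumes same_min: "min_bundle_value v m Y' = min_bundle_value v m Y"
  shows "tie_potential v m (card R + 1) Y' < tie_potential v m (card R + 1) Y"
proof -
  define C where "C = card R + 1"
  define I where "I = {i. i < m \<and> v (Y i) = min_bundle_value v m Y}"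
  define I' where "I' = {i. i < m \<and> v (Y' i) = min_bundle_value v m Y}"
  have unchanged: "Y' i = Y i" "i \<in> I" if "i \<in> I' - {s}" for i
  proof -
    have "i \<noteq> j" using that j(4) by (auto simp: I'_def Y'_def)
    then show "Y' i = Y i" "i \<in> I" using that by (auto simp: I_def I'_def Y'_def)
  qed
  have rest: "(\<Sum>i\<in>I' - {s}. C - card (Y' i)) \<le> (\<Sum>i\<in>I - {s}. C - card (Y i))"
    using unchanged by (simp add: I_def sum_mono2 subset_iff)
  have "e \<notin> Y s" "e \<in> R" "Y s \<subseteq> R"
    using part s(1) j(1-3) is_partition_subset[OF part] unfolding is_partition_def by blast+
  moreover have "Y' s = insert e (Y s)" using j(2) by (simp add: Y'_def)
  ultimately have card_Ys: "card (Y' s) = card (Y s) + 1" "card (Y' s) \<le> card R"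
    using \<open>finite R\<close> card_mono[OF \<open>finite R\<close>, of "insert e (Y s)"] by (simp_all add: finite_subset)
  have pot_Y: "tie_potential v m C Y = (C - card (Y s)) + (\<Sum>i\<in>I - {s}. C - card (Y i))"
    unfolding tie_potential_def I_def[symmetric] using s by (intro sum.remove) (auto simp: I_def)
  have "tie_potential v m C Y' = (if s \<in> I' then C - card (Y' s) else 0) + (\<Sum>i\<in>I' - {s}. C - card (Y' i))"
    unfolding tie_potential_def same_min I'_def[symmetric]
    by (cases "s \<in> I'") (auto simp: I'_def sum.remove)
  then show ?thesis
    using pot_Y rest card_Ys unfolding C_def by (auto split: if_splits)
qed

lemma obtain_min_bundle_efx_partition:
  assumes "finite R" and val: "valuation R v" and "m \<ge> 1"
  obtains Y s where "is_partition R m Y" "s < m" "\<forall>j<m. v (Y s) \<le> v (Y j)"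
    "\<forall>j<m. \<forall>e\<in>Y j. v (Y j - {e}) \<le> v (Y s)"
proof -
  let ?Parts = "{Y. is_partition R m Y}"
  have "min_bundle_value v m ` ?Parts \<subseteq> v ` Pow R"
  proof
    fix x assume "x \<in> min_bundle_value v m ` ?Parts"
    then obtain Y s where "is_partition R m Y" "s < m" "x = v (Y s)"
      using min_bundle_value_attained[OF \<open>m \<ge> 1\<close>] by (metis imageE mem_Collect_eq)
    then show "x \<in> v ` Pow R" using is_partition_subset by blast
  qed
  then have "finite (min_bundle_value v m ` ?Parts)"
    using \<open>finite R\<close> finite_subset by blast
  moreover have "?Parts \<noteq> {}" using is_partition_single[OF \<open>m \<ge> 1\<close>] by blast
  ultimately obtain Y0 where "Y0 \<in> ?Parts"
    and maximin: "\<And>Y'. Y' \<in> ?Parts \<Longrightarrow> min_bundle_value v m Y' \<le> min_bundle_value v m Y0"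
    by (rule finite_image_obtains_max) blast
  define \<mu> where "\<mu> = min_bundle_value v m Y0"
  obtain Y where Y: "is_partition R m Y" "min_bundle_value v m Y = \<mu>"
    and least: "\<And>Y'. is_partition R m Y' \<Longrightarrow> min_bundle_value v m Y' = \<mu> \<Longrightarrow>
      tie_potential v m (card R + 1) Y \<le> tie_potential v m (card R + 1) Y'"
    using ex_has_least_nat[of "\<lambda>Y. is_partition R m Y \<and> min_bundle_value v m Y = \<mu>" Y0
        "tie_potential v m (card R + 1)"] \<open>Y0 \<in> ?Parts\<close> by (auto simp: \<mu>_def)
  obtain s where s: "s < m" "v (Y s) = min_bundle_value v m Y"
    using min_bundle_value_attained[OF \<open>m \<ge> 1\<close>] by blast
  have "v (Y j - {e}) \<le> v (Y s)" if j: "j < m" "e \<in> Y j" for j e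
  proof (rule ccontr)
    assume envy: "\<not> v (Y j - {e}) \<le> v (Y s)"
    have "j \<noteq> s"
      using envy valuation_mono[OF val, of "Y s - {e}" "Y s"] is_partition_subset[OF Y(1) s(1)] by auto
    let ?Y' = "Y(s := insert e (Y s), j := Y j - {e})"
    have part': "is_partition R m ?Y'"
      using is_partition_move[OF Y(1) s(1) j(1) \<open>j \<noteq> s\<close> j(2)] .
    have "\<mu> \<le> min_bundle_value v m ?Y'"
      using min_bundle_value_move[OF Y(1) val s j(1) \<open>j \<noteq> s\<close> j(2)] envy s Y(2) by simp
    then have "min_bundle_value v m ?Y' = min_bundle_value v m Y"
      using maximin[of ?Y'] part' Y(2) \<mu>_def by simp
    then have "tie_potential v m (card R + 1) ?Y' < tie_potential v m (card R + 1) Y"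
      using tie_potential_move[OF Y(1) \<open>finite R\<close> s j(1) \<open>j \<noteq> s\<close> j(2)] envy s by simp
    then show False using least[OF part'] \<open>min_bundle_value v m ?Y' = _\<close> Y(2) by fastforce
  qed
  then show ?thesis
    using that Y(1) s min_bundle_value_le[of _ m v Y] by auto
qed

lemma MXS_le:
  assumes "finite M" "is_partition M n A" "i < n" and "\<forall>j<n. \<forall>e\<in>A j. v (A j - {e}) \<le> v (A i)"
  shows "MXS M v n \<le> v (A i)"
proof -
  have "mxs_bundles M v n \<subseteq> Pow M"
    unfolding mxs_bundles_def using is_partition_subset by blast
  then have "finite (mxs_bundles M v n)"
    using \<open>finite M\<close> finite_subset by blast
  moreover have "A i \<in> mxs_bundles M v n"
    unfolding mxs_bundles_def using assms(2-4) by blast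
  ultimately show ?thesis
    unfolding MXS_def by simp
qed

lemma below_MXS_less_unenvious_bundle:
  assumes "finite M" and val: "valuation M v" and part: "is_partition M n X"
    and s: "k \<le> s" "s < n"
    and below: "\<forall>i<k. v (X i) < MXS M v n"
    and unenvious: "\<forall>j<n. k \<le> j \<longrightarrow> (\<forall>e\<in>X j. v (X j - {e}) \<le> v (X s))"
    and "i < k"
  shows "v (X i) < v (X s)"
proof -
  obtain i' where i': "i' < k" and top: "\<And>i. i < k \<Longrightarrow> v (X i) \<le> v (X i')"
    using finite_image_obtains_max[of "\<lambda>i. v (X i)" "{..<k}"] \<open>i < k\<close> by auto
  have "i' < n" using i' s by simp
  have "\<not> (\<forall>j<n. \<forall>e\<in>X j. v (X j - {e}) \<le> v (X i'))"
  proof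
    assume "\<forall>j<n. \<forall>e\<in>X j. v (X j - {e}) \<le> v (X i')"
    then have "MXS M v n \<le> v (X i')" by (rule MXS_le[OF \<open>finite M\<close> part \<open>i' < n\<close>])
    then show False using below i' by (simp add: not_le[symmetric])
  qed
  then obtain j e where j: "j < n" "e \<in> X j" "v (X i') < v (X j - {e})"
    by (auto simp: not_le)
  have "\<not> j < k"
  proof
    assume "j < k"
    then have "v (X j - {e}) \<le> v (X i')"
      using top valuation_mono[OF val, of "X j - {e}" "X j"] is_partition_subset[OF part j(1)]
      by (meson Diff_subset order.trans)
    then show False using j(3) by simp
  qed
  then show ?thesis
    using unenvious j top[OF \<open>i < k\<close>] by fastforce
qed

lemma rmms_prop_MXS:
  assumes "finite M" and val: "valuation M v"
  shows "rmms_prop M v n (MXS M v n)"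
  unfolding rmms_prop_def
proof (intro allI impI)
  fix k B assume "k < n"
    and "(\<forall>j<k. B j \<subseteq> M \<and> v (B j) < MXS M v n) \<and> (\<forall>i<k. \<forall>j<k. i \<noteq> j \<longrightarrow> B i \<inter> B j = {})"
  then have B: "\<forall>j<k. B j \<subseteq> M" "\<forall>j<k. v (B j) < MXS M v n"
    and B_part: "is_partition (\<Union>j<k. B j) k B"
    by (auto simp: is_partition_def)
  define R where "R = M - (\<Union>j<k. B j)"
  have "finite R" "valuation R v" "n - k \<ge> 1"
    using \<open>finite M\<close> valuation_subset[OF val] \<open>k < n\<close> by (auto simp: R_def)
  then obtain Y s where Y: "is_partition R (n - k) Y" and s: "s < n - k"
    and Y_min: "\<forall>j<n - k. v (Y s) \<le> v (Y j)"
    and Y_efx: "\<forall>j<n - k. \<forall>e\<in>Y j. v (Y j - {e}) \<le> v (Y s)"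
    by (rule obtain_min_bundle_efx_partition)
  define X where "X = (\<lambda>j. if j < k then B j else Y (j - k))"
  have "(\<Union>j<k. B j) \<union> R = M" "k + (n - k) = n" "(\<Union>j<k. B j) \<inter> R = {}"
    using B(1) \<open>k < n\<close> by (auto simp: R_def)
  then have X: "is_partition M n X"
    using is_partition_append[OF B_part Y] by (simp add: X_def)
  have X_efx: "\<forall>j<n. k \<le> j \<longrightarrow> (\<forall>e\<in>X j. v (X j - {e}) \<le> v (X (k + s)))"
    using Y_efx by (auto simp: X_def)
  have B_less: "v (B i) < v (Y s)" if "i < k" for i
    using below_MXS_less_unenvious_bundle[OF \<open>finite M\<close> val X _ _ _ X_efx that] B(2) s that
    by (simp add: X_def)
  have "\<forall>j<n. \<forall>e\<in>X j. v (X j - {e}) \<le> v (X (k + s))"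
  proof (intro allI impI ballI)
    fix j e assume "j < n" "e \<in> X j"
    show "v (X j - {e}) \<le> v (X (k + s))"
    proof (cases "j < k")
      case True
      then have "v (B j - {e}) \<le> v (B j)"
        using B(1) by (intro valuation_mono[OF val]) auto
      then show ?thesis using B_less[OF True] True by (simp add: X_def)
    qed (use X_efx \<open>j < n\<close> \<open>e \<in> X j\<close> in auto)
  qed
  then have "MXS M v n \<le> v (Y s)"
    using MXS_le[OF \<open>finite M\<close> X, of "k + s"] s by (simp add: X_def)
  then show "\<exists>P. is_partition R (n - k) P \<and> (\<forall>j<n - k. MXS M v n \<le> v (P j))"
    using Y Y_min by force
qed

lemma rmms_prop_round_up:
  assumes "finite M" "n \<ge> 1" and t: "rmms_prop M v n t"
  shows "\<exists>y\<in>v ` Pow M. t \<le> y \<and> rmms_prop M v n y"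
proof -
  define U where "U = {x \<in> v ` Pow M. t \<le> x}"
  obtain P where P: "is_partition M n P" "\<forall>j<n. t \<le> v (P j)"
    using t[unfolded rmms_prop_def, rule_format, of 0 "\<lambda>_. {}"] \<open>n \<ge> 1\<close> by simp blast
  have "P 0 \<subseteq> M" using is_partition_subset[OF P(1)] \<open>n \<ge> 1\<close> by simp
  then have "v (P 0) \<in> U"
    using P(2) \<open>n \<ge> 1\<close> by (simp add: U_def)
  moreover have "finite U" using \<open>finite M\<close> by (simp add: U_def)
  ultimately have "Min U \<in> U" and Min_U_le: "\<And>x. x \<in> U \<Longrightarrow> Min U \<le> x"
    by (auto intro: Min_in)
  \<comment> \<open>No value of v lies in [t, Min U), so the thresholds t and Min U admit the same bundles.\<close>
  have "rmms_prop M v n (Min U)"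
    unfolding rmms_prop_def
  proof (intro allI impI)
    fix k B assume "k < n"
      and B: "(\<forall>j<k. B j \<subseteq> M \<and> v (B j) < Min U) \<and> (\<forall>i<k. \<forall>j<k. i \<noteq> j \<longrightarrow> B i \<inter> B j = {})"
    have "v (B j) < t" if "j < k" for j
    proof (rule ccontr)
      assume "\<not> v (B j) < t"
      then have "v (B j) \<in> U" using B that by (simp add: U_def)
      then show False using Min_U_le B that by fastforce
    qed
    with B have "(\<forall>j<k. B j \<subseteq> M \<and> v (B j) < t) \<and> (\<forall>i<k. \<forall>j<k. i \<noteq> j \<longrightarrow> B i \<inter> B j = {})"
      by blast
    from t[unfolded rmms_prop_def, rule_format, OF \<open>k < n\<close> this]
    obtain P where P: "is_partition (M - (\<Union>j<k. B j)) (n - k) P" "\<forall>j<n - k. t \<le> v (P j)"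
      by blast
    have "Min U \<le> v (P j)" if "j < n - k" for j
    proof (rule Min_U_le)
      have "P j \<subseteq> M" using is_partition_subset[OF P(1) that] by blast
      then show "v (P j) \<in> U" using P(2) that by (simp add: U_def)
    qed
    then show "\<exists>P. is_partition (M - (\<Union>j<k. B j)) (n - k) P \<and> (\<forall>j<n - k. Min U \<le> v (P j))"
      using P(1) by blast
  qed
  then show ?thesis using \<open>Min U \<in> U\<close> by (auto simp: U_def)
qed

lemma RMMS_ge:
  assumes "finite M" "n \<ge> 1" "rmms_prop M v n t"
  shows "t \<le> RMMS M v n"
proof -
  define T where "T = {x \<in> v ` Pow M. rmms_prop M v n x}"
  have "finite T" using \<open>finite M\<close> by (simp add: T_def)
  have below_T: "\<exists>y\<in>T. t' \<le> y" if "rmms_prop M v n t'" for t'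
    using rmms_prop_round_up[OF assms(1,2) that] by (auto simp: T_def)
  then obtain y where "y \<in> T" "t \<le> y" using assms(3) by blast
  have "RMMS M v n = Max T"
    unfolding RMMS_def
  proof (rule Greatest_equality)
    show "rmms_prop M v n (Max T)"
      using Max_in[OF \<open>finite T\<close>] \<open>y \<in> T\<close> by (auto simp: T_def)
    show "t' \<le> Max T" if "rmms_prop M v n t'" for t'
      using below_T[OF that] Max_ge[OF \<open>finite T\<close>] by force
  qed
  then show ?thesis using Max_ge[OF \<open>finite T\<close> \<open>y \<in> T\<close>] \<open>t \<le> y\<close> by simp
qed

theorem mainTheorem1:
  fixes M :: "'a set" and v :: "'a set \<Rightarrow> real" and n :: nat
  assumes "finite M" and "n \<ge> 1" and "valuation M v"
    and "\<forall>S\<subseteq>M. v S \<ge> 0"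
  shows "RMMS M v n \<ge> MXS M v n"
  using RMMS_ge[OF assms(1,2) rmms_prop_MXS[OF assms(1,3)]] .

end
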